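(* Let $\lambda$ be a partition of $n$ with $s>t\ge1$, where $t=\lambda_2-1$ and $s=\lambda_1-1$. Let $\mathcal{G}$ be the generating set of $\mathcal{I}_\lambda$ consisting of: $e_1(n),\dots,e_{\ell(\lambda)-1}(n)$; the sets $e_{b_k}(n-k)$ for $1\le k\le t$, where $b_k=\lambda'_1+\cdots+\lambda'_k-k+1$; and all square-free monomials of degree $n-s$. Writing $S=\{x_1,\dots,x_n\}$, the set obtained from $\mathcal{G}$ by removing the $\binom{n-s+t}{t}$ square-free monomials $$e_{n-s}\big(S\setminus\{x_1,x_2,\dots,x_{s-t},x_{i_1},\dots,x_{i_t}\}\big),\qquad s-t<i_1<i_2<\cdots<i_t\le n,$$ still generates $\mathcal{I}_\lambda$.
   Context: $k$ is a field of characteristic $0$ and $R=k[x_1,\dots,x_n]$. For a set $S$ of variables, $e_r(S)$ is the $r$-th elementary symmetric polynomial in the variables of $S$ ($e_0=1$, $e_r(S)=0$ if $r>|S|$); note $e_r(S)$ with $|S|=r$ is the square-free monomial $\prod_{x\in S}x$. For $1\le m\le n$, $e_r(m)=\{e_r(S): S\subseteq\{x_1,\dots,x_n\},\ |S|=m\}$. A partition $\lambda$ of $n$ has parts $\lambda_1\ge\lambda_2\ge\cdots$ (zero beyond its length $\ell(\lambda)$) and conjugate $\lambda'_i=\#\{j:\lambda_j\ge i\}$. For $1\le m\le n$ let $\delta_m(\lambda)=\lambda'_n+\cdots+\lambda'_{n-m+1}$ ($\lambda'_i=0$ for $i>\lambda_1$). The De Concini–Procesi ideal $\mathcal{I}_\lambda\subseteq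 R$ is the ideal generated by all elements of the sets $e_r(m)$ with $1\le m\le n$ and $m\ge r>m-\delta_m(\lambda)$. *)

theory Defs
  imports "HOL-Library.Poly_Mapping"
begin

text \<open>The ring R = k[x_1,...,x_n] consists of the polynomials involving only x_1..x_n.\<close>
type_synonym 'a mpoly = "(nat \<Rightarrow>\<^sub>0 nat) \<Rightarrow>\<^sub>0 'a"

definition var :: "nat \<Rightarrow> 'a::comm_ring_1 mpoly" where
  "var i = Poly_Mapping.single (Poly_Mapping.single i 1) 1"

definition polys_in :: "nat \<Rightarrow> 'a::comm_ring_1 mpoly set" where
  "polys_in n = {p. \<forall>m \<in> Poly_Mapping.keys p. Poly_Mapping.keys m \<subseteq> {1..n}}"

definition ideal_gen :: "nat \<Rightarrow> 'a::comm_ring_1 mpoly set \<Rightarrow> 'a mpoly set" where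
  "ideal_gen n G = {p. \<exists>F c. finite F \<and> F \<subseteq> G \<and> (\<forall>g\<in>F. c g \<in> polys_in n)
                          \<and> p = (\<Sum>g\<in>F. c g * g)}"

definition esym :: "nat \<Rightarrow> nat set \<Rightarrow> 'a::comm_ring_1 mpoly" where
  "esym r S = (\<Sum>T\<in>{T. T \<subseteq> S \<and> card T = r}. \<Prod>i\<in>T. var i)"

definition esym_set :: "nat \<Rightarrow> nat \<Rightarrow> nat \<Rightarrow> 'a::comm_ring_1 mpoly set" where
  "esym_set n r m = {esym r S | S. S \<subseteq> {1..n} \<and> card S = m}"

definition is_partition :: "nat list \<Rightarrow> nat \<Rightarrow> bool" where
  "is_partition lam n \<longleftrightarrow> sorted_wrt (\<ge>) lam \<and> (\<forall>x\<in>set lam. x > 0) \<and> sum_list lam = n"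

definition part :: "nat list \<Rightarrow> nat \<Rightarrow> nat" where
  "part lam i = (if 1 \<le> i \<and> i \<le> length lam then lam ! (i - 1) else 0)"

definition conj_part :: "nat list \<Rightarrow> nat \<Rightarrow> nat" where
  "conj_part lam i = card {j. 1 \<le> j \<and> j \<le> length lam \<and> part lam j \<ge> i}"

definition delta :: "nat list \<Rightarrow> nat \<Rightarrow> nat \<Rightarrow> nat" where
  "delta lam n m = (\<Sum>i\<in>{n - m + 1..n}. conj_part lam i)"

text \<open>Generators of the De Concini--Procesi ideal: e_r(m) with 1 \<le> m \<le> n and
  m \<ge> r > m - delta_m (written additively to avoid truncated subtraction).\<close>
definition DP_gens :: "nat list \<Rightarrow> nat \<Rightarrow> 'a::comm_ring_1 mpoly set" where
  "DP_gens lam n = (\<Union>m\<in>{1..n}. \<Union>r\<in>{r. r \<le> m \<and> m < r + delta lam n m}. esym_set n r m)"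

definition DP_ideal :: "nat list \<Rightarrow> nat \<Rightarrow> 'a::comm_ring_1 mpoly set" where
  "DP_ideal lam n = ideal_gen n (DP_gens lam n)"

end

theory Submission
  imports Defs
begin

text \<open>Let J be the ideal generated by G without the removed monomials. Every removed element
  is a square-free monomial avoiding x_1, ..., x_{s-t}, so the remaining elements of G, none of
  which is such a monomial, stay in J. From the generators e_{b_1}(n-1), the identities
  \<Sum>_x e_c(S - x) = (|S| - c) e_c(S) and \<Sum>_x x e_r(S - x) = (r + 1) e_{r+1}(S) give all
  e_r(n) and e_r(n-1) with r \<ge> b_1 (this is where characteristic 0 enters), and
  e_r(S) = e_r(S \<union> y) - y e_{r-1}(S) pushes this down to all e_r(n-k) with r \<ge> b_k, k \<le> t.
  A removed monomial x_U is the only term of e_{n-s}(U \<union> {x_1, ..., x_{s-t}}), an element of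
  e_{n-s}(n-t), that avoids x_1, ..., x_{s-t}; all other terms are kept generators. Finally, the
  De Concini--Procesi generators on (n-k)-sets are the e_r with r \<ge> b_k, which for t < k \<le> s
  means r \<ge> n - s, so they are combinations of square-free monomials of degree n - s.\<close>

lemma polys_in_zero [simp]: "0 \<in> polys_in n"
  by (simp add: polys_in_def)

lemma polys_in_one [simp]: "1 \<in> polys_in n"
  by (simp add: polys_in_def)

lemma polys_in_add:
  assumes "p \<in> polys_in n" "q \<in> polys_in n"
  shows "p + q \<in> polys_in n"
  using assms keys_add[of p q] unfolding polys_in_def by blast

lemma polys_in_uminus: "p \<in> polys_in n \<Longrightarrow> - p \<in> polys_in n"
  by (simp add: polys_in_def)

lemma polys_in_mult:
  assumes "p \<in> polys_in n" "q \<in> polys_in n"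
  shows "p * q \<in> polys_in n"
proof -
  have "Poly_Mapping.keys m \<subseteq> {1..n}" if m: "m \<in> Poly_Mapping.keys (p * q)" for m
  proof -
    obtain a b where "m = a + b" "a \<in> Poly_Mapping.keys p" "b \<in> Poly_Mapping.keys q"
      using m keys_mult[of p q] by blast
    with assms keys_add[of a b] show ?thesis
      unfolding polys_in_def by blast
  qed
  then show ?thesis
    unfolding polys_in_def by blast
qed

lemma polys_in_const: "Poly_Mapping.single 0 c \<in> polys_in n"
  by (simp add: polys_in_def)

lemma polys_in_var: "i \<in> {1..n} \<Longrightarrow> (var i :: 'a::comm_ring_1 mpoly) \<in> polys_in n"
  by (simp add: polys_in_def var_def)

lemma polys_in_prod_var:
  "finite T \<Longrightarrow> T \<subseteq> {1..n} \<Longrightarrow> (\<Prod>i\<in>T. var i :: 'a::comm_ring_1 mpoly) \<in> polys_in n"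
  by (induction T rule: finite_induct) (simp_all add: polys_in_mult polys_in_var)

lemma ideal_genI:
  assumes "finite F" "F \<subseteq> X" "\<forall>g\<in>F. c g \<in> polys_in n" "p = (\<Sum>g\<in>F. c g * g)"
  shows "p \<in> ideal_gen n X"
  using assms unfolding ideal_gen_def by blast

lemma ideal_genE:
  assumes "p \<in> ideal_gen n X"
  obtains F c where "finite F" "F \<subseteq> X" "\<forall>g\<in>F. c g \<in> polys_in n" "p = (\<Sum>g\<in>F. c g * g)"
  using assms unfolding ideal_gen_def by blast

lemma ideal_gen_generator: "g \<in> X \<Longrightarrow> g \<in> ideal_gen n X"
  by (rule ideal_genI[of "{g}" _ "\<lambda>_. 1"]) simp_all

lemma ideal_gen_zero: "0 \<in> ideal_gen n X"
  by (rule ideal_genI[of "{}"]) simp_all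

lemma ideal_gen_add:
  assumes "p \<in> ideal_gen n X" "q \<in> ideal_gen n X"
  shows "p + q \<in> ideal_gen n X"
proof -
  obtain F1 c1 where 1: "finite F1" "F1 \<subseteq> X" "\<forall>g\<in>F1. c1 g \<in> polys_in n" "p = (\<Sum>g\<in>F1. c1 g * g)"
    using assms(1) by (rule ideal_genE)
  obtain F2 c2 where 2: "finite F2" "F2 \<subseteq> X" "\<forall>g\<in>F2. c2 g \<in> polys_in n" "q = (\<Sum>g\<in>F2. c2 g * g)"
    using assms(2) by (rule ideal_genE)
  define c where "c g = (if g \<in> F1 then c1 g else 0) + (if g \<in> F2 then c2 g else 0)" for g
  have "(\<Sum>g\<in>F1 \<union> F2. c g * g)
      = (\<Sum>g\<in>F1 \<union> F2. (if g \<in> F1 then c1 g * g else 0) + (if g \<in> F2 then c2 g * g else 0))"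
    by (rule sum.cong) (simp_all add: c_def distrib_right)
  also have "\<dots> = (\<Sum>g\<in>F1 \<union> F2. if g \<in> F1 then c1 g * g else 0)
      + (\<Sum>g\<in>F1 \<union> F2. if g \<in> F2 then c2 g * g else 0)"
    by (rule sum.distrib)
  also have "\<dots> = sum (\<lambda>g. c1 g * g) ((F1 \<union> F2) \<inter> F1) + sum (\<lambda>g. c2 g * g) ((F1 \<union> F2) \<inter> F2)"
    using 1 2 by (simp only: sum.inter_restrict finite_UnI)
  also have "\<dots> = p + q"
    using 1 2 by (simp add: Int_absorb1)
  finally have "p + q = (\<Sum>g\<in>F1 \<union> F2. c g * g)" ..
  moreover have "\<forall>g\<in>F1 \<union> F2. c g \<in> polys_in n"
    using 1 2 by (simp add: c_def polys_in_add)
  ultimately show ?thesis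
    using 1 2 by (intro ideal_genI[of "F1 \<union> F2" _ c]) auto
qed

lemma ideal_gen_mult:
  assumes "c \<in> polys_in n" "p \<in> ideal_gen n X"
  shows "c * p \<in> ideal_gen n X"
proof -
  obtain F d where F: "finite F" "F \<subseteq> X" "\<forall>g\<in>F. d g \<in> polys_in n" "p = (\<Sum>g\<in>F. d g * g)"
    using assms(2) by (rule ideal_genE)
  then have "c * p = (\<Sum>g\<in>F. (c * d g) * g)"
    by (simp add: sum_distrib_left mult.assoc)
  with F assms(1) show ?thesis
    by (intro ideal_genI[of F _ "\<lambda>g. c * d g"]) (auto intro: polys_in_mult)
qed

lemma ideal_gen_sum:
  "finite A \<Longrightarrow> (\<And>x. x \<in> A \<Longrightarrow> f x \<in> ideal_gen n X) \<Longrightarrow> sum f A \<in> ideal_gen n X"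
  by (induction A rule: finite_induct) (auto intro: ideal_gen_add ideal_gen_zero)

lemma ideal_gen_diff:
  assumes "p \<in> ideal_gen n X" "q \<in> ideal_gen n X"
  shows "p - q \<in> ideal_gen n X"
proof -
  have "(- 1) * q \<in> ideal_gen n X"
    using assms(2) by (intro ideal_gen_mult polys_in_uminus polys_in_one)
  with assms(1) have "p + (- 1) * q \<in> ideal_gen n X"
    by (rule ideal_gen_add)
  then show ?thesis by simp
qed

lemma ideal_gen_subset:
  assumes "X \<subseteq> ideal_gen n Y"
  shows "ideal_gen n X \<subseteq> ideal_gen n Y"
proof
  fix p assume "p \<in> ideal_gen n X"
  then obtain F c where F: "finite F" "F \<subseteq> X" "\<forall>g\<in>F. c g \<in> polys_in n" "p = (\<Sum>g\<in>F. c g * g)"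
    by (rule ideal_genE)
  show "p \<in> ideal_gen n Y"
    unfolding F(4) using F assms by (intro ideal_gen_sum ideal_gen_mult) auto
qed

lemma ideal_gen_mono: "X \<subseteq> Y \<Longrightarrow> ideal_gen n X \<subseteq> ideal_gen n Y"
  by (rule ideal_gen_subset) (auto intro: ideal_gen_generator)

lemma ideal_gen_cancel_of_nat:
  fixes p :: "'a::field_char_0 mpoly"
  assumes "k \<noteq> 0" "of_nat k * p \<in> ideal_gen n X"
  shows "p \<in> ideal_gen n X"
proof -
  have "Poly_Mapping.single 0 (1 / of_nat k) * (of_nat k * p) \<in> ideal_gen n X"
    using assms(2) by (rule ideal_gen_mult[OF polys_in_const])
  moreover have "Poly_Mapping.single 0 (1 / of_nat k) * (of_nat k :: 'a mpoly) = 1"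
  proof -
    have "Poly_Mapping.single 0 (1 / of_nat k) * (of_nat k :: 'a mpoly)
        = Poly_Mapping.single 0 (1 / of_nat k * of_nat k)"
      by (simp only: single_of_nat[symmetric] mult_single add_0_right)
    then show ?thesis
      using assms(1) by simp
  qed
  ultimately show ?thesis
    by (simp add: mult.assoc[symmetric])
qed

abbreviation mon :: "nat set \<Rightarrow> 'a::comm_ring_1 mpoly" where
  "mon T \<equiv> \<Prod>i\<in>T. var i"

lemma finite_subsets_card: "finite S \<Longrightarrow> finite {T. T \<subseteq> S \<and> card T = r}"
  by (rule finite_subset[of _ "Pow S"]) auto

lemma esym_card_eq_mon:
  assumes "finite S"
  shows "esym (card S) S = mon S"
proof -
  have "{T. T \<subseteq> S \<and> card T = card S} = {S}"
    using card_subset_eq[OF assms] by blast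
  then show ?thesis
    by (simp add: esym_def)
qed

lemma sum_mon_subsets_containing:
  assumes "finite S" "x \<notin> S"
  shows "(\<Sum>W\<in>{W. W \<subseteq> insert x S \<and> card W = Suc r \<and> x \<in> W}. mon W)
         = var x * (esym r S :: 'a::comm_ring_1 mpoly)"
proof -
  let ?C = "{U. U \<subseteq> S \<and> card U = r}"
  have inj: "inj_on (insert x) ?C"
  proof (rule inj_onI)
    fix U V assume "U \<in> ?C" "V \<in> ?C" "insert x U = insert x V"
    moreover have "x \<notin> U" "x \<notin> V" using \<open>U \<in> ?C\<close> \<open>V \<in> ?C\<close> assms(2) by blast+
    ultimately show "U = V" using insert_ident by metis
  qed
  have "{W. W \<subseteq> insert x S \<and> card W = Suc r \<and> x \<in> W} = insert x ` ?C"
  proof (intro equalityI subsetI)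
    fix W assume W: "W \<in> {W. W \<subseteq> insert x S \<and> card W = Suc r \<and> x \<in> W}"
    then have "W - {x} \<in> ?C" "W = insert x (W - {x})"
      by auto
    then show "W \<in> insert x ` ?C" by blast
  next
    fix W assume "W \<in> insert x ` ?C"
    then obtain U where "U \<subseteq> S" "card U = r" "W = insert x U" by blast
    moreover have "finite U" "x \<notin> U"
      using \<open>U \<subseteq> S\<close> assms finite_subset by blast+
    ultimately show "W \<in> {W. W \<subseteq> insert x S \<and> card W = Suc r \<and> x \<in> W}" by auto
  qed
  then have "(\<Sum>W\<in>{W. W \<subseteq> insert x S \<and> card W = Suc r \<and> x \<in> W}. mon W)
      = (\<Sum>U\<in>?C. mon (insert x U) :: 'a mpoly)"
    by (simp add: sum.reindex[OF inj])
  also have "\<dots> = (\<Sum>U\<in>?C. var x * mon U)"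
  proof (rule sum.cong[OF refl])
    fix U assume "U \<in> ?C"
    then have "finite U" "x \<notin> U" using assms finite_subset by blast+
    then show "mon (insert x U) = var x * mon U" by simp
  qed
  also have "\<dots> = var x * esym r S"
    by (simp add: esym_def sum_distrib_left)
  finally show ?thesis .
qed

lemma esym_insert:
  assumes "finite S" "x \<notin> S"
  shows "esym (Suc r) (insert x S) = esym (Suc r) S + var x * (esym r S :: 'a::comm_ring_1 mpoly)"
proof -
  let ?B = "{W. W \<subseteq> insert x S \<and> card W = Suc r}"
  have "finite ?B" using assms by (intro finite_subsets_card) simp
  have "esym (Suc r) (insert x S) = (\<Sum>W\<in>{W\<in>?B. x \<notin> W} \<union> {W\<in>?B. x \<in> W}. mon W :: 'a mpoly)"
    unfolding esym_def by (rule sum.cong) auto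
  also have "\<dots> = (\<Sum>W\<in>{W\<in>?B. x \<notin> W}. mon W) + (\<Sum>W\<in>{W\<in>?B. x \<in> W}. mon W)"
    using \<open>finite ?B\<close> by (intro sum.union_disjoint) (auto intro: rev_finite_subset)
  also have "{W\<in>?B. x \<notin> W} = {W. W \<subseteq> S \<and> card W = Suc r}" using assms(2) by auto
  also have "{W\<in>?B. x \<in> W} = {W. W \<subseteq> insert x S \<and> card W = Suc r \<and> x \<in> W}" by auto
  finally show ?thesis
    unfolding sum_mon_subsets_containing[OF assms] by (simp only: esym_def)
qed

lemma sum_var_mult_esym_remove:
  assumes "finite T"
  shows "(\<Sum>x\<in>T. var x * esym r (T - {x})) = of_nat (Suc r) * (esym (Suc r) T :: 'a::comm_ring_1 mpoly)"
proof -
  let ?B = "{W. W \<subseteq> T \<and> card W = Suc r}"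
  have "(\<Sum>x\<in>T. var x * (esym r (T - {x}) :: 'a mpoly)) = (\<Sum>x\<in>T. \<Sum>W\<in>{W. W \<in> ?B \<and> x \<in> W}. mon W)"
  proof (rule sum.cong[OF refl])
    fix x assume "x \<in> T"
    then have "insert x (T - {x}) = T" by auto
    then show "var x * (esym r (T - {x}) :: 'a mpoly) = (\<Sum>W\<in>{W. W \<in> ?B \<and> x \<in> W}. mon W)"
      using sum_mon_subsets_containing[of "T - {x}" x r, symmetric] assms by simp
  qed
  also have "\<dots> = (\<Sum>W\<in>?B. \<Sum>x\<in>{x. x \<in> T \<and> x \<in> W}. mon W)"
    using assms by (intro sum.swap_restrict) (auto intro: finite_subsets_card)
  also have "\<dots> = (\<Sum>W\<in>?B. of_nat (Suc r) * mon W)"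
  proof (rule sum.cong[OF refl])
    fix W assume "W \<in> ?B"
    then have "{x. x \<in> T \<and> x \<in> W} = W" "card W = Suc r" by auto
    then show "(\<Sum>x\<in>{x. x \<in> T \<and> x \<in> W}. mon W) = (of_nat (Suc r) * mon W :: 'a mpoly)"
      by simp
  qed
  also have "\<dots> = of_nat (Suc r) * esym (Suc r) T"
    by (simp add: esym_def sum_distrib_left)
  finally show ?thesis .
qed

lemma sum_esym_remove:
  assumes "finite T"
  shows "(\<Sum>x\<in>T. esym r (T - {x})) = of_nat (card T - r) * (esym r T :: 'a::comm_ring_1 mpoly)"
proof -
  let ?B = "{U. U \<subseteq> T \<and> card U = r}"
  have "(\<Sum>x\<in>T. (esym r (T - {x}) :: 'a mpoly)) = (\<Sum>x\<in>T. \<Sum>U\<in>{U. U \<in> ?B \<and> x \<notin> U}. mon U)"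
  proof (rule sum.cong[OF refl])
    fix x
    have "{U. U \<subseteq> T - {x} \<and> card U = r} = {U. U \<in> ?B \<and> x \<notin> U}" by auto
    then show "(esym r (T - {x}) :: 'a mpoly) = (\<Sum>U\<in>{U. U \<in> ?B \<and> x \<notin> U}. mon U)"
      by (simp add: esym_def)
  qed
  also have "\<dots> = (\<Sum>U\<in>?B. \<Sum>x\<in>{x. x \<in> T \<and> x \<notin> U}. mon U)"
    using assms by (intro sum.swap_restrict) (auto intro: finite_subsets_card)
  also have "\<dots> = (\<Sum>U\<in>?B. of_nat (card T - r) * mon U)"
  proof (rule sum.cong[OF refl])
    fix U assume U: "U \<in> ?B"
    then have "{x. x \<in> T \<and> x \<notin> U} = T - U" by auto
    moreover have "card (T - U) = card T - r"
      using U assms by (auto simp: card_Diff_subset finite_subset)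
    ultimately show "(\<Sum>x\<in>{x. x \<in> T \<and> x \<notin> U}. mon U) = (of_nat (card T - r) * mon U :: 'a mpoly)"
      by simp
  qed
  also have "\<dots> = of_nat (card T - r) * esym r T"
    by (simp add: esym_def sum_distrib_left)
  finally show ?thesis .
qed

definition exponent :: "nat set \<Rightarrow> (nat \<Rightarrow>\<^sub>0 nat)" where
  "exponent T = (\<Sum>i\<in>T. Poly_Mapping.single i 1)"

lemma mon_eq_single: "finite T \<Longrightarrow> (mon T :: 'a::comm_ring_1 mpoly) = Poly_Mapping.single (exponent T) 1"
  by (induction T rule: finite_induct) (simp_all add: exponent_def var_def mult_single)

lemma lookup_exponent: "finite T \<Longrightarrow> Poly_Mapping.lookup (exponent T) j = (if j \<in> T then 1 else 0)"
  by (simp add: exponent_def lookup_sum lookup_single when_def)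

lemma exponent_inj:
  assumes "finite T" "finite T'" "exponent T = exponent T'"
  shows "T = T'"
proof (rule set_eqI)
  fix j
  have "Poly_Mapping.lookup (exponent T) j = Poly_Mapping.lookup (exponent T') j"
    using assms(3) by simp
  then show "j \<in> T \<longleftrightarrow> j \<in> T'"
    using assms(1,2) by (simp add: lookup_exponent split: if_splits)
qed

lemma lookup_mon_exponent:
  assumes "finite T" "finite T'"
  shows "Poly_Mapping.lookup (mon T' :: 'a::comm_ring_1 mpoly) (exponent T) = (if T' = T then 1 else 0)"
  using assms exponent_inj[OF assms(2,1)] by (simp add: mon_eq_single lookup_single when_def)

lemma lookup_esym_exponent:
  assumes "finite S" "finite T"
  shows "Poly_Mapping.lookup (esym r S :: 'a::comm_ring_1 mpoly) (exponent T)
         = (if T \<subseteq> S \<and> card T = r then 1 else 0)"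
proof -
  have "Poly_Mapping.lookup (esym r S :: 'a mpoly) (exponent T)
      = (\<Sum>T'\<in>{T'. T' \<subseteq> S \<and> card T' = r}. if T' = T then 1 else 0)"
    unfolding esym_def lookup_sum
    using assms by (intro sum.cong refl lookup_mon_exponent) (auto intro: finite_subset)
  then show ?thesis
    using assms by (simp add: finite_subsets_card)
qed

lemma mon_inj:
  assumes "finite T" "finite T'" "(mon T :: 'a::comm_ring_1 mpoly) = mon T'"
  shows "T = T'"
proof -
  have "Poly_Mapping.lookup (mon T' :: 'a mpoly) (exponent T) = 1"
    using lookup_mon_exponent[OF assms(1) assms(1), where 'a='a] assms(3) by simp
  then show ?thesis
    using lookup_mon_exponent[OF assms(1,2), where 'a='a] by (simp split: if_splits)
qed

lemma esym_neq_mon: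
  assumes "finite S" "finite W" "1 \<le> r" "r < card S"
  shows "(esym r S :: 'a::comm_ring_1 mpoly) \<noteq> mon W"
proof
  assume eq: "(esym r S :: 'a mpoly) = mon W"
  have coeff: "T = W" if "T \<subseteq> S" "card T = r" for T
  proof -
    have "finite T" using that assms(1) finite_subset by blast
    then have "Poly_Mapping.lookup (mon W :: 'a mpoly) (exponent T) = 1"
      using that eq lookup_esym_exponent[OF assms(1), of T r, where 'a='a] by simp
    then show ?thesis
      using lookup_mon_exponent[OF \<open>finite T\<close> assms(2), where 'a='a] by (simp split: if_splits)
  qed
  obtain T where T: "T \<subseteq> S" "card T = r"
    using assms(4) by (meson less_imp_le obtain_subset_with_card_n)
  then obtain x where x: "x \<in> T"
    using assms(3) by (metis card.empty ex_in_conv not_one_le_zero)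
  have "finite T" using T assms(1) finite_subset by blast
  then have "\<not> S \<subseteq> T"
    using T assms(4) card_mono[of T S] by linarith
  then obtain y where y: "y \<in> S" "y \<notin> T" by blast
  have "card (insert y (T - {x})) = r"
    using \<open>finite T\<close> T x y assms(3) by simp
  then have "insert y (T - {x}) = W"
    using T x y by (intro coeff) auto
  moreover have "T = W" using T by (rule coeff)
  ultimately show False using y by blast
qed

text \<open>Both statements are needed in the induction: e_{r+1}(N) comes from the deletions in
  degree r, and the deletions in degree r + 1 come from e_{r+1}(N).\<close>
lemma esym_in_ideal_full_and_deletions:
  fixes X :: "'a::field_char_0 mpoly set"
  assumes N: "N \<subseteq> {1..n}" "c < card N"
    and deletions: "\<And>x. x \<in> N \<Longrightarrow> esym c (N - {x}) \<in> ideal_gen n X"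
    and "c \<le> r"
  shows "esym r N \<in> ideal_gen n X \<and> (\<forall>x\<in>N. esym r (N - {x}) \<in> ideal_gen n X)"
  using \<open>c \<le> r\<close>
proof (induction r rule: dec_induct)
  case base
  have "finite N" using N(1) by (rule finite_subset) simp
  have "(\<Sum>x\<in>N. esym c (N - {x})) \<in> ideal_gen n X"
    using \<open>finite N\<close> by (intro ideal_gen_sum deletions)
  then have "of_nat (card N - c) * esym c N \<in> ideal_gen n X"
    by (simp only: sum_esym_remove[OF \<open>finite N\<close>])
  then have "esym c N \<in> ideal_gen n X"
    by (rule ideal_gen_cancel_of_nat[rotated]) (use N(2) in simp)
  with deletions show ?case by blast
next
  case (step r)
  have "finite N" using N(1) by (rule finite_subset) simp
  have var_mult: "var x * esym r (N - {x}) \<in> ideal_gen n X" if "x \<in> N" for x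
    using that N(1) step.IH by (intro ideal_gen_mult polys_in_var) auto
  with \<open>finite N\<close> have "(\<Sum>x\<in>N. var x * esym r (N - {x})) \<in> ideal_gen n X"
    by (intro ideal_gen_sum)
  then have "of_nat (Suc r) * esym (Suc r) N \<in> ideal_gen n X"
    by (simp only: sum_var_mult_esym_remove[OF \<open>finite N\<close>])
  then have full: "esym (Suc r) N \<in> ideal_gen n X"
    by (rule ideal_gen_cancel_of_nat[rotated]) simp
  have "esym (Suc r) (N - {x}) \<in> ideal_gen n X" if "x \<in> N" for x
  proof -
    have "esym (Suc r) N = esym (Suc r) (N - {x}) + var x * (esym r (N - {x}) :: 'a mpoly)"
      using esym_insert[of "N - {x}" x r] \<open>finite N\<close> that by (simp add: insert_absorb)
    then have "esym (Suc r) (N - {x}) = esym (Suc r) N - var x * (esym r (N - {x}) :: 'a mpoly)"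
      by simp
    also have "\<dots> \<in> ideal_gen n X"
      using full var_mult[OF that] by (rule ideal_gen_diff)
    finally show ?thesis .
  qed
  with full show ?case by blast
qed

lemma esym_in_ideal_from_next_level:
  fixes X :: "'a::field_char_0 mpoly set"
  assumes next_level: "\<And>S r. S \<subseteq> {1..n} \<Longrightarrow> card S = Suc m \<Longrightarrow> c' \<le> r \<Longrightarrow> esym r S \<in> ideal_gen n X"
    and gens: "\<And>S. S \<subseteq> {1..n} \<Longrightarrow> card S = m \<Longrightarrow> esym c S \<in> ideal_gen n X"
    and "c' \<le> Suc c" "m < n"
    and S: "S \<subseteq> {1..n}" "card S = m"
    and "c \<le> r"
  shows "esym r S \<in> ideal_gen n X"
  using \<open>c \<le> r\<close>
proof (induction r rule: dec_induct)
  case base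
  show ?case using S by (rule gens)
next
  case (step r)
  have "finite S" using S(1) by (rule finite_subset) simp
  have "\<not> {1..n} \<subseteq> S"
    using S \<open>m < n\<close> card_mono[OF \<open>finite S\<close>, of "{1..n}"] by auto
  then obtain y where y: "y \<in> {1..n}" "y \<notin> S" by blast
  have "esym (Suc r) (insert y S) \<in> ideal_gen n X"
    using S y \<open>finite S\<close> \<open>c' \<le> Suc c\<close> step.hyps by (intro next_level) auto
  moreover have "var y * esym r S \<in> ideal_gen n X"
    using y(1) step.IH by (intro ideal_gen_mult polys_in_var)
  ultimately have "esym (Suc r) (insert y S) - var y * esym r S \<in> ideal_gen n X"
    by (rule ideal_gen_diff)
  moreover have "esym (Suc r) S = esym (Suc r) (insert y S) - var y * (esym r S :: 'a mpoly)"
    unfolding esym_insert[OF \<open>finite S\<close> y(2), of r] by simp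
  ultimately show ?case by simp
qed

lemma mon_in_ideal_of_esym:
  fixes X :: "'a::comm_ring_1 mpoly set"
  assumes "finite S" "U \<subseteq> S"
    and "esym (card U) S \<in> ideal_gen n X"
    and others: "\<And>T. T \<subseteq> S \<Longrightarrow> card T = card U \<Longrightarrow> T \<noteq> U \<Longrightarrow> mon T \<in> ideal_gen n X"
  shows "mon U \<in> ideal_gen n X"
proof -
  let ?B = "{T. T \<subseteq> S \<and> card T = card U}"
  have "finite ?B" using assms(1) by (rule finite_subsets_card)
  then have "esym (card U) S = mon U + (\<Sum>T\<in>?B - {U}. mon T)"
    unfolding esym_def using assms(2) by (simp add: sum.remove)
  moreover have "(\<Sum>T\<in>?B - {U}. mon T) \<in> ideal_gen n X"
    using \<open>finite ?B\<close> by (intro ideal_gen_sum others) auto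
  ultimately have "esym (card U) S - (\<Sum>T\<in>?B - {U}. mon T) \<in> ideal_gen n X"
    using assms(3) by (intro ideal_gen_diff)
  moreover have "mon U = esym (card U) S - (\<Sum>T\<in>?B - {U}. mon T :: 'a mpoly)"
    unfolding \<open>esym (card U) S = mon U + (\<Sum>T\<in>?B - {U}. mon T)\<close> by simp
  ultimately show ?thesis by simp
qed

lemma esym_in_ideal_of_mons:
  fixes X :: "'a::comm_ring_1 mpoly set"
  assumes "S \<subseteq> {1..n}" "d \<le> r"
    and mons: "\<And>U. U \<subseteq> S \<Longrightarrow> card U = d \<Longrightarrow> mon U \<in> ideal_gen n X"
  shows "esym r S \<in> ideal_gen n X"
  unfolding esym_def
proof (rule ideal_gen_sum)
  show "finite {T. T \<subseteq> S \<and> card T = r}"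
    using assms(1) by (intro finite_subsets_card finite_subset[of S "{1..n}"]) simp_all
next
  fix T assume T: "T \<in> {T. T \<subseteq> S \<and> card T = r}"
  then have "finite T" using assms(1) by (auto intro: finite_subset)
  obtain U where U: "U \<subseteq> T" "card U = d"
    using T assms(2) by (metis (mono_tags) mem_Collect_eq obtain_subset_with_card_n)
  have "mon T = mon (T - U) * mon U"
    by (rule prod.subset_diff[OF U(1) \<open>finite T\<close>])
  also have "\<dots> \<in> ideal_gen n X"
    using T U assms(1) \<open>finite T\<close>
    by (intro ideal_gen_mult polys_in_prod_var mons) auto
  finally show "mon T \<in> ideal_gen n X" .
qed

lemma sum_part:
  assumes "is_partition lam n"
  shows "(\<Sum>j\<in>{1..length lam}. part lam j) = n"
proof -
  have "(\<Sum>j\<in>{1..length lam}. part lam j) = (\<Sum>k<length lam. part lam (Suc k))"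
    by (simp add: sum.atLeast1_atMost_eq)
  also have "\<dots> = (\<Sum>k<length lam. lam ! k)"
    by (rule sum.cong) (auto simp: part_def)
  also have "\<dots> = n"
    using assms by (simp add: is_partition_def sum_list_sum_nth lessThan_atLeast0)
  finally show ?thesis .
qed

lemma part_pos:
  assumes "is_partition lam n" "1 \<le> j" "j \<le> length lam"
  shows "0 < part lam j"
proof -
  have "lam ! (j - 1) \<in> set lam" using assms(2,3) by simp
  then show ?thesis using assms by (auto simp: part_def is_partition_def)
qed

lemma part_antimono:
  assumes "is_partition lam n" "1 \<le> i" "i \<le> j"
  shows "part lam j \<le> part lam i"
proof (cases "j \<le> length lam \<and> i < j")
  case True
  then have "i - 1 < j - 1" "j - 1 < length lam"
    using assms(2) by auto
  then have "lam ! (j - 1) \<le> lam ! (i - 1)"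
    using assms(1) sorted_wrt_nth_less[of "(\<ge>)" lam "i - 1" "j - 1"] by (simp add: is_partition_def)
  then show ?thesis using assms True by (simp add: part_def)
next
  case False
  then show ?thesis using assms by (auto simp: part_def)
qed

lemma part_le_size:
  assumes "is_partition lam n"
  shows "part lam j \<le> n"
proof (cases "1 \<le> j \<and> j \<le> length lam")
  case True
  then show ?thesis
    using member_le_sum[of j "{1..length lam}" "part lam"] sum_part[OF assms] by simp
qed (auto simp: part_def)

definition conj_sum :: "nat list \<Rightarrow> nat \<Rightarrow> nat" where
  "conj_sum lam k = (\<Sum>i\<in>{1..k}. conj_part lam i)"

definition dp_bound :: "nat list \<Rightarrow> nat \<Rightarrow> nat" where
  "dp_bound lam k = conj_sum lam k + 1 - k"

lemma conj_sum_eq_sum_min: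
  "conj_sum lam k = (\<Sum>j\<in>{1..length lam}. min (part lam j) k)"
proof -
  have "conj_sum lam k = (\<Sum>i\<in>{1..k}. \<Sum>j\<in>{j. j \<in> {1..length lam} \<and> i \<le> part lam j}. 1)"
    unfolding conj_sum_def conj_part_def by (rule sum.cong) (auto intro: arg_cong[where f = card])
  also have "\<dots> = (\<Sum>j\<in>{1..length lam}. \<Sum>i\<in>{i. i \<in> {1..k} \<and> i \<le> part lam j}. 1)"
    by (rule sum.swap_restrict) auto
  also have "\<dots> = (\<Sum>j\<in>{1..length lam}. min (part lam j) k)"
  proof (rule sum.cong[OF refl])
    fix j
    have "{i. i \<in> {1..k} \<and> i \<le> part lam j} = {1..min (part lam j) k}" by auto
    then show "(\<Sum>i\<in>{i. i \<in> {1..k} \<and> i \<le> part lam j}. 1) = min (part lam j) k" by simp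
  qed
  finally show ?thesis .
qed

lemma conj_sum_le:
  assumes "is_partition lam n"
  shows "conj_sum lam k \<le> n"
  unfolding conj_sum_eq_sum_min sum_part[OF assms, symmetric] by (rule sum_mono) simp

lemma conj_sum_eq_size:
  assumes "is_partition lam n" "part lam 1 \<le> k"
  shows "conj_sum lam k = n"
proof -
  have "min (part lam j) k = part lam j" if "j \<in> {1..length lam}" for j
    using that assms part_antimono[OF assms(1), of 1 j] by simp
  then show ?thesis
    unfolding conj_sum_eq_sum_min sum_part[OF assms(1), symmetric] by (rule sum.cong[OF refl])
qed

lemma conj_sum_ge:
  assumes "is_partition lam n" "k \<le> n"
  shows "k \<le> conj_sum lam k"
proof (cases "part lam 1 \<le> k")
  case True
  then show ?thesis using assms conj_sum_eq_size by simp
next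
  case False
  then have "1 \<le> length lam" by (auto simp: part_def split: if_splits)
  then have "min (part lam 1) k \<le> conj_sum lam k"
    unfolding conj_sum_eq_sum_min by (intro member_le_sum) auto
  with False show ?thesis by simp
qed

lemma conj_sum_one:
  assumes "is_partition lam n"
  shows "conj_sum lam 1 = length lam"
proof -
  have "min (part lam j) 1 = 1" if "j \<in> {1..length lam}" for j
    using part_pos[OF assms, of j] that by simp
  then show ?thesis
    unfolding conj_sum_eq_sum_min by simp
qed

lemma conj_part_pos:
  assumes "1 \<le> i" "i \<le> part lam 1"
  shows "1 \<le> conj_part lam i"
proof -
  have "1 \<le> length lam" using assms by (auto simp: part_def split: if_splits)
  then have "1 \<in> {j. 1 \<le> j \<and> j \<le> length lam \<and> part lam j \<ge> i}" using assms(2) by simp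
  moreover have "finite {j. 1 \<le> j \<and> j \<le> length lam \<and> part lam j \<ge> i}"
    by (rule finite_subset[of _ "{1..length lam}"]) auto
  ultimately have "0 < card {j. 1 \<le> j \<and> j \<le> length lam \<and> part lam j \<ge> i}"
    by (metis card_gt_0_iff empty_iff)
  then show ?thesis
    unfolding conj_part_def by linarith
qed

lemma delta_eq:
  assumes "is_partition lam n" "m \<le> n"
  shows "delta lam n m = n - conj_sum lam (n - m)"
proof -
  have "{n - m + 1..n} = {1..n} - {1..n - m}" by auto
  then have "delta lam n m = conj_sum lam n - conj_sum lam (n - m)"
    unfolding delta_def conj_sum_def by (simp add: sum_diff_nat)
  then show ?thesis
    using conj_sum_eq_size[OF assms(1) part_le_size[OF assms(1)]] by simp
qed

lemma mem_DP_gens_iff: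
  assumes "is_partition lam n"
  shows "x \<in> DP_gens lam n \<longleftrightarrow>
    (\<exists>k<n. \<exists>r. dp_bound lam k \<le> r \<and> r \<le> n - k \<and> x \<in> esym_set n r (n - k))"
proof -
  have "m < r + delta lam n m \<longleftrightarrow> dp_bound lam (n - m) \<le> r" if "m \<le> n" for m r
    using that delta_eq[OF assms that] conj_sum_ge[OF assms, of "n - m"] conj_sum_le[OF assms, of "n - m"]
    unfolding dp_bound_def by linarith
  then have "x \<in> DP_gens lam n \<longleftrightarrow>
      (\<exists>m\<in>{1..n}. \<exists>r. dp_bound lam (n - m) \<le> r \<and> r \<le> m \<and> x \<in> esym_set n r m)"
    unfolding DP_gens_def by auto
  also have "\<dots> \<longleftrightarrow> (\<exists>k<n. \<exists>r. dp_bound lam k \<le> r \<and> r \<le> n - k \<and> x \<in> esym_set n r (n - k))"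
  proof
    assume "\<exists>m\<in>{1..n}. \<exists>r. dp_bound lam (n - m) \<le> r \<and> r \<le> m \<and> x \<in> esym_set n r m"
    then obtain m r where "m \<in> {1..n}" "dp_bound lam (n - m) \<le> r" "r \<le> m" "x \<in> esym_set n r m"
      by blast
    then show "\<exists>k<n. \<exists>r. dp_bound lam k \<le> r \<and> r \<le> n - k \<and> x \<in> esym_set n r (n - k)"
      by (intro exI[of _ "n - m"]) auto
  next
    assume "\<exists>k<n. \<exists>r. dp_bound lam k \<le> r \<and> r \<le> n - k \<and> x \<in> esym_set n r (n - k)"
    then obtain k r where "k < n" "dp_bound lam k \<le> r" "r \<le> n - k" "x \<in> esym_set n r (n - k)"
      by blast
    then show "\<exists>m\<in>{1..n}. \<exists>r. dp_bound lam (n - m) \<le> r \<and> r \<le> m \<and> x \<in> esym_set n r m"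
      by (intro bexI[of _ "n - k"]) auto
  qed
  finally show ?thesis .
qed

lemma dp_bound_zero [simp]: "dp_bound lam 0 = 1"
  by (simp add: dp_bound_def conj_sum_def)

lemma dp_bound_one:
  assumes "is_partition lam n"
  shows "dp_bound lam 1 = length lam"
  using conj_sum_one[OF assms] by (simp add: dp_bound_def)

lemma dp_bound_pos:
  assumes "is_partition lam n" "k \<le> n"
  shows "1 \<le> dp_bound lam k"
  using conj_sum_ge[OF assms] by (simp add: dp_bound_def)

lemma dp_bound_mono_Suc:
  assumes "k < part lam 1"
  shows "dp_bound lam k \<le> dp_bound lam (Suc k)"
  using conj_part_pos[of "Suc k" lam] assms by (simp add: dp_bound_def conj_sum_def)

locale DP_setting =
  fixes lam :: "nat list" and n s t :: nat
  assumes partition: "is_partition lam n"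
    and part_1: "part lam 1 = Suc s"
    and part_2: "part lam 2 = Suc t"
    and t_less_s: "t < s"
    and t_pos: "1 \<le> t"
begin

lemma length_ge_2: "2 \<le> length lam"
  using part_2 by (auto simp: part_def split: if_splits)

lemma part_le_second: "2 \<le> j \<Longrightarrow> part lam j \<le> Suc t"
  using part_antimono[OF partition, of 2 j] part_2 by simp

lemma conj_sum_split:
  "conj_sum lam k = min (Suc s) k + (\<Sum>j\<in>{2..length lam}. min (part lam j) k)"
proof -
  have "{1..length lam} = insert 1 {2..length lam}" using length_ge_2 by auto
  then show ?thesis
    unfolding conj_sum_eq_sum_min using part_1 by simp
qed

lemma sum_parts_from_2: "(\<Sum>j\<in>{2..length lam}. part lam j) + Suc s = n"
proof -
  have "{1..length lam} = insert 1 {2..length lam}" using length_ge_2 by auto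
  then show ?thesis
    using sum_part[OF partition] part_1 by simp
qed

lemma conj_sum_upper: "conj_sum lam k + Suc s \<le> min (Suc s) k + n"
proof -
  have "(\<Sum>j\<in>{2..length lam}. min (part lam j) k) \<le> (\<Sum>j\<in>{2..length lam}. part lam j)"
    by (rule sum_mono) simp
  then show ?thesis
    using conj_sum_split[of k] sum_parts_from_2 by linarith
qed

lemma conj_sum_beyond_t:
  assumes "t < k"
  shows "conj_sum lam k + Suc s = min (Suc s) k + n"
proof -
  have "(\<Sum>j\<in>{2..length lam}. min (part lam j) k) = (\<Sum>j\<in>{2..length lam}. part lam j)"
  proof (rule sum.cong[OF refl])
    fix j assume "j \<in> {2..length lam}"
    then have "part lam j \<le> Suc t" by (simp add: part_le_second)
    with assms show "min (part lam j) k = part lam j" by simp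
  qed
  then show ?thesis
    using conj_sum_split[of k] sum_parts_from_2 by linarith
qed

lemma length_plus_s_le: "length lam + s \<le> n"
  using conj_sum_upper[of 1] conj_sum_one[OF partition] by simp

lemma dp_bound_le: "k \<le> Suc s \<Longrightarrow> dp_bound lam k \<le> n - s"
  using conj_sum_upper[of k] by (simp add: dp_bound_def)

lemma dp_bound_beyond_t: "t < k \<Longrightarrow> k \<le> Suc s \<Longrightarrow> dp_bound lam k = n - s"
  using conj_sum_beyond_t[of k] length_plus_s_le by (simp add: dp_bound_def)

definition gens :: "'a::comm_ring_1 mpoly set" where
  "gens = (\<Union>r\<in>{1..length lam - 1}. esym_set n r n)
        \<union> (\<Union>k\<in>{1..t}. esym_set n (dp_bound lam k) (n - k))
        \<union> esym_set n (n - s) (n - s)"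

definition removed :: "'a::comm_ring_1 mpoly set" where
  "removed = {esym (n - s) ({1..n} - ({1..s - t} \<union> I)) | I. I \<subseteq> {s - t + 1..n} \<and> card I = t}"

lemma removedE:
  assumes "x \<in> removed"
  obtains W where "finite W" "W \<inter> {1..s - t} = {}" "x = mon W"
proof -
  obtain I where I: "I \<subseteq> {s - t + 1..n}" "card I = t" "x = esym (n - s) ({1..n} - ({1..s - t} \<union> I))"
    using assms unfolding removed_def by blast
  define W where "W = {1..n} - ({1..s - t} \<union> I)"
  have "finite I" using I(1) by (rule finite_subset) simp
  then have "card ({1..s - t} \<union> I) = s"
    using I(1,2) t_less_s by (subst card_Un_disjoint) auto
  moreover have "{1..s - t} \<union> I \<subseteq> {1..n}"
    using I(1) length_plus_s_le by auto
  ultimately have "card W = n - s"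
    unfolding W_def by (subst card_Diff_subset) (auto intro: finite_subset)
  then have "x = mon W"
    using I(3) esym_card_eq_mon[of W] by (simp add: W_def)
  then show ?thesis
    by (intro that[of W]) (auto simp: W_def)
qed

lemma esym_not_removed: "finite S \<Longrightarrow> 1 \<le> r \<Longrightarrow> r < card S \<Longrightarrow> esym r S \<notin> removed"
  by (metis removedE esym_neq_mon)

lemma gens_full_in_ideal:
  assumes "1 \<le> r" "r < length lam"
  shows "esym r {1..n} \<in> (ideal_gen n (gens - removed) :: 'a::field_char_0 mpoly set)"
proof (rule ideal_gen_generator)
  have "esym r {1..n} \<in> (esym_set n r n :: 'a mpoly set)"
    unfolding esym_set_def by auto
  moreover have "r \<in> {1..length lam - 1}" using assms by auto
  ultimately have "esym r {1..n} \<in> (gens :: 'a mpoly set)"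
    unfolding gens_def by blast
  moreover have "esym r {1..n} \<notin> (removed :: 'a mpoly set)"
    using assms length_plus_s_le by (intro esym_not_removed) auto
  ultimately show "esym r {1..n} \<in> (gens - removed :: 'a mpoly set)" by blast
qed

lemma gens_bound_in_ideal:
  assumes "1 \<le> k" "k \<le> t" "S \<subseteq> {1..n}" "card S = n - k"
  shows "esym (dp_bound lam k) S \<in> (ideal_gen n (gens - removed) :: 'a::field_char_0 mpoly set)"
proof (rule ideal_gen_generator)
  have "esym (dp_bound lam k) S \<in> (gens :: 'a mpoly set)"
    using assms unfolding gens_def esym_set_def by auto
  moreover have "finite S" using assms(3) by (rule finite_subset) simp
  moreover have "1 \<le> dp_bound lam k" "dp_bound lam k \<le> n - s"
    using assms(2) t_less_s length_plus_s_le dp_bound_pos[OF partition] dp_bound_le by auto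
  ultimately show "esym (dp_bound lam k) S \<in> (gens - removed :: 'a mpoly set)"
    using assms t_less_s length_plus_s_le esym_not_removed by fastforce
qed

lemma gens_mon_in_ideal:
  assumes "U \<subseteq> {1..n}" "card U = n - s" "U \<inter> {1..s - t} \<noteq> {}"
  shows "mon U \<in> (ideal_gen n (gens - removed) :: 'a::field_char_0 mpoly set)"
proof (rule ideal_gen_generator)
  have "finite U" using assms(1) by (rule finite_subset) simp
  then have mon_U: "mon U = (esym (n - s) U :: 'a mpoly)"
    using esym_card_eq_mon assms(2) by metis
  then have "mon U \<in> (gens :: 'a mpoly set)"
    using assms unfolding gens_def esym_set_def by auto
  moreover have "mon U \<notin> (removed :: 'a mpoly set)"
  proof
    assume "mon U \<in> (removed :: 'a mpoly set)"
    then obtain W where "finite W" "W \<inter> {1..s - t} = {}" "(mon U :: 'a mpoly) = mon W"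
      by (rule removedE)
    with \<open>finite U\<close> assms(3) mon_inj show False by blast
  qed
  ultimately show "mon U \<in> (gens - removed :: 'a mpoly set)" by blast
qed

lemma esym_full_and_first_level_in_ideal:
  assumes "length lam \<le> r"
  shows "esym r {1..n} \<in> (ideal_gen n (gens - removed) :: 'a::field_char_0 mpoly set)
    \<and> (\<forall>x\<in>{1..n}. esym r ({1..n} - {x}) \<in> (ideal_gen n (gens - removed) :: 'a mpoly set))"
proof (rule esym_in_ideal_full_and_deletions[OF _ _ _ assms])
  show "length lam < card {1..n}"
    using length_plus_s_le t_less_s by simp
  show "esym (length lam) ({1..n} - {x}) \<in> (ideal_gen n (gens - removed) :: 'a mpoly set)"
    if "x \<in> {1..n}" for x
    using that t_pos gens_bound_in_ideal[of 1 "{1..n} - {x}"] dp_bound_one[OF partition] by simp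
qed simp

lemma esym_full_in_ideal:
  assumes "1 \<le> r"
  shows "esym r {1..n} \<in> (ideal_gen n (gens - removed) :: 'a::field_char_0 mpoly set)"
proof (cases "r < length lam")
  case True
  with assms show ?thesis by (rule gens_full_in_ideal)
next
  case False
  then show ?thesis
    by (intro conjunct1[OF esym_full_and_first_level_in_ideal]) simp
qed

lemma esym_level_in_ideal:
  "1 \<le> k \<Longrightarrow> k \<le> t \<Longrightarrow> S \<subseteq> {1..n} \<Longrightarrow> card S = n - k \<Longrightarrow> dp_bound lam k \<le> r
   \<Longrightarrow> esym r S \<in> (ideal_gen n (gens - removed) :: 'a::field_char_0 mpoly set)"
proof (induction k arbitrary: S r)
  case 0
  then show ?case by simp
next
  case (Suc k)
  show ?case
  proof (cases "k = 0")
    case True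
    have "card ({1..n} - S) = 1"
      using Suc.prems True length_plus_s_le t_less_s by (simp add: card_Diff_subset finite_subset)
    then obtain x where "{1..n} - S = {x}" by (rule card_1_singletonE)
    then have "x \<in> {1..n}" "S = {1..n} - {x}" using Suc.prems(3) by auto
    moreover have "length lam \<le> r"
      using Suc.prems(5) True dp_bound_one[OF partition] by simp
    ultimately show ?thesis
      using bspec[OF conjunct2[OF esym_full_and_first_level_in_ideal]] by simp
  next
    case False
    show ?thesis
    proof (rule esym_in_ideal_from_next_level[of n "n - Suc k" "dp_bound lam k" _ "dp_bound lam (Suc k)"])
      show "esym r S \<in> (ideal_gen n (gens - removed) :: 'a mpoly set)"
        if "S \<subseteq> {1..n}" "card S = Suc (n - Suc k)" "dp_bound lam k \<le> r" for S r
        using that False Suc.prems(2) t_less_s length_plus_s_le by (intro Suc.IH) auto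
      show "esym (dp_bound lam (Suc k)) S \<in> (ideal_gen n (gens - removed) :: 'a mpoly set)"
        if "S \<subseteq> {1..n}" "card S = n - Suc k" for S
        using that Suc.prems(2) by (intro gens_bound_in_ideal) auto
      show "dp_bound lam k \<le> Suc (dp_bound lam (Suc k))"
        using dp_bound_mono_Suc[of k lam] part_1 Suc.prems(2) t_less_s by simp
    qed (use Suc.prems length_plus_s_le length_ge_2 in auto)
  qed
qed

lemma mon_in_ideal:
  assumes "U \<subseteq> {1..n}" "card U = n - s"
  shows "mon U \<in> (ideal_gen n (gens - removed) :: 'a::field_char_0 mpoly set)"
proof (cases "U \<inter> {1..s - t} = {}")
  case True
  define S where "S = {1..s - t} \<union> U"
  have "finite U" using assms(1) by (rule finite_subset) simp
  have "S \<subseteq> {1..n}" using assms(1) length_plus_s_le by (auto simp: S_def)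
  moreover have "card S = n - t"
    unfolding S_def using True \<open>finite U\<close> assms(2) t_less_s length_plus_s_le
    by (subst card_Un_disjoint) auto
  ultimately have "esym (n - s) S \<in> (ideal_gen n (gens - removed) :: 'a mpoly set)"
    using t_pos t_less_s dp_bound_le[of t] by (intro esym_level_in_ideal[of t]) auto
  show ?thesis
  proof (rule mon_in_ideal_of_esym[of S U])
    show "esym (card U) S \<in> (ideal_gen n (gens - removed) :: 'a mpoly set)"
      using \<open>esym (n - s) S \<in> ideal_gen n (gens - removed)\<close> assms(2) by simp
    show "finite S" using \<open>S \<subseteq> {1..n}\<close> by (rule finite_subset) simp
    show "U \<subseteq> S" by (simp add: S_def)
    show "mon T \<in> (ideal_gen n (gens - removed) :: 'a mpoly set)"
      if "T \<subseteq> S" "card T = card U" "T \<noteq> U" for T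
    proof (rule gens_mon_in_ideal)
      show "T \<subseteq> {1..n}" using that(1) \<open>S \<subseteq> {1..n}\<close> by blast
      show "T \<inter> {1..s - t} \<noteq> {}"
      proof
        assume "T \<inter> {1..s - t} = {}"
        then have "T \<subseteq> U" using that(1) by (auto simp: S_def)
        then show False
          using card_subset_eq[OF \<open>finite U\<close>] that(2,3) assms(2) by blast
      qed
    qed (use that(2) assms(2) in simp)
  qed
next
  case False
  then show ?thesis using assms by (rule gens_mon_in_ideal[rotated 2])
qed

lemma DP_gens_subset_ideal:
  "DP_gens lam n \<subseteq> (ideal_gen n (gens - removed) :: 'a::field_char_0 mpoly set)"
proof
  fix x :: "'a mpoly" assume "x \<in> DP_gens lam n"
  then obtain k r S where k: "k < n" "dp_bound lam k \<le> r" "r \<le> n - k"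
    and S: "S \<subseteq> {1..n}" "card S = n - k" and x: "x = esym r S"
    unfolding mem_DP_gens_iff[OF partition] esym_set_def by blast
  consider "k = 0" | "1 \<le> k" "k \<le> t" | "t < k" "k \<le> s" | "s < k" by linarith
  then show "x \<in> ideal_gen n (gens - removed)"
  proof cases
    case 1
    then have "S = {1..n}" using S by (simp add: card_subset_eq)
    then show ?thesis using 1 k x esym_full_in_ideal by simp
  next
    case 2
    then show ?thesis using k S x esym_level_in_ideal by blast
  next
    case 3
    then have "n - s \<le> r" using k dp_bound_beyond_t by simp
    with S(1) show ?thesis
      unfolding x
    proof (rule esym_in_ideal_of_mons)
      show "mon U \<in> (ideal_gen n (gens - removed) :: 'a mpoly set)"
        if "U \<subseteq> S" "card U = n - s" for U
        using that S(1) by (intro mon_in_ideal) auto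
    qed
  next
    case 4
    then have "dp_bound lam k = n + 1 - k"
      using conj_sum_eq_size[OF partition] part_1 by (simp add: dp_bound_def)
    then show ?thesis using k by simp
  qed
qed

lemma gens_minus_removed_subset_DP_gens: "(gens - removed :: 'a::comm_ring_1 mpoly set) \<subseteq> DP_gens lam n"
proof
  fix x :: "'a mpoly" assume "x \<in> gens - removed"
  then consider r where "1 \<le> r" "r \<le> length lam - 1" "x \<in> esym_set n r n"
    | k where "1 \<le> k" "k \<le> t" "x \<in> esym_set n (dp_bound lam k) (n - k)"
    | "x \<in> esym_set n (n - s) (n - s)"
    unfolding gens_def by auto
  then show "x \<in> DP_gens lam n"
  proof cases
    case 1
    then show ?thesis unfolding mem_DP_gens_iff[OF partition] using length_plus_s_le by (intro exI[of _ 0] exI[of _ r] conjI) auto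
  next
    case 2
    then show ?thesis unfolding mem_DP_gens_iff[OF partition]
      using length_plus_s_le t_less_s dp_bound_le[of k] by (intro exI[of _ k] exI[of _ "dp_bound lam k"] conjI) auto
  next
    case 3
    then show ?thesis unfolding mem_DP_gens_iff[OF partition]
      using length_plus_s_le length_ge_2 t_less_s dp_bound_beyond_t[of s] by (intro exI[of _ s] exI[of _ "n - s"] conjI) auto
  qed
qed

theorem ideal_gen_gens_minus_removed:
  "ideal_gen n (gens - removed) = (DP_ideal lam n :: 'a::field_char_0 mpoly set)"
  unfolding DP_ideal_def
  using ideal_gen_mono[OF gens_minus_removed_subset_DP_gens] ideal_gen_subset[OF DP_gens_subset_ideal]
  by blast

end


theorem mainTheorem7:
  fixes lam :: "nat list" and n s t :: nat
  assumes "is_partition lam n"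
    and "s = part lam 1 - 1" and "t = part lam 2 - 1"
    and "s > t" and "t \<ge> 1"
  defines "b \<equiv> (\<lambda>k. (\<Sum>i\<in>{1..k}. conj_part lam i) + 1 - k)"
  defines "G \<equiv> (\<Union>r\<in>{1..length lam - 1}. esym_set n r n)
              \<union> (\<Union>k\<in>{1..t}. esym_set n (b k) (n - k))
              \<union> esym_set n (n - s) (n - s)"
  defines "Rem \<equiv> {esym (n - s) ({1..n} - ({1..s - t} \<union> I)) | I.
                    I \<subseteq> {s - t + 1..n} \<and> card I = t}"
  shows "ideal_gen n (G - Rem) = (DP_ideal lam n :: 'a::field_char_0 mpoly set)"
proof -
  have "part lam 1 \<ge> part lam 2" "part lam 2 \<ge> 2"
    using part_antimono[OF assms(1), of 1 2] assms(3,5) by auto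
  then interpret DP_setting lam n s t
    using assms(1-5) by unfold_locales auto
  have "b = dp_bound lam"
    unfolding b_def dp_bound_def conj_sum_def ..
  then have "G = gens"
    unfolding G_def gens_def by simp
  moreover have "Rem = removed"
    unfolding Rem_def removed_def ..
  ultimately show ?thesis
    by (simp add: ideal_gen_gens_minus_removed)
qed

end
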